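(* Let $A\in\mathbb{R}^{n\times n}$, $B\in\mathbb{R}^{n\times m}$, horizon $N\ge1$, $\theta\in(0,1)$. For $t\in\{1,\dots,N\}$ let $\mathcal{X}_t=\{x\in\mathbb{R}^n\mid (x-p_t)^\top P_t(x-p_t)\le1\}$ and let $\mathcal{U}=\{u\in\mathbb{R}^m\mid u^\top Qu\le1\}$, with $p_t\in\mathbb{R}^n$ and $P_t$, $Q$ symmetric positive definite. Let $Y\in\mathbb{R}^{n\times n}$ be symmetric positive definite and $\mathcal{W}=\{w\mid w^\top Yw\le1\}$, and let $w^{(0)}(0),\dots,w^{(0)}(N-1)$ be a random disturbance sequence such that $\Pr\{w^{(0)}(t)\in\mathcal{W}\ \forall t\in\{0,\dots,N-1\}\}\ge1-\theta$. Let $(\hat\Phi^*,\Psi^*,\lambda_0^*,\lambda_1^* )$ be a feasible solution of the program: minimize $\operatorname{trace}\hat\Phi$ over symmetric $\hat\Phi\succ0$, $\Psi\in\mathbb{R}^{m\times n}$, $\lambda_0,\lambda_1\in\mathbb{R}$ subject to $\lambda_0\ge0$, $\lambda_1\ge0$, $1-\lambda_0-\lambda_1\ge0$; $\begin{bmatrix}\hat\Phi-\frac{1}{\lambda_1}Y^{-1} & A\hat\Phi+B\Psi\\ (A\hat\Phi+B\Psi)^\top & \lambda_0\hat\Phi\end{bmatrix}\succeq0$; $\begin{bmatrix}\hat\Phi & \Psi^\top Q^{1/2}\\ Q^{1/2}\Psi & I\end{bmatrix}\succ0$; $\hat\Phi\prec P_t^{-1}$ for all $t\in\{1,\dots,N\}$.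 Define $\Phi=(\hat\Phi^* )^{-1}$, $K=\Psi^*\Phi$, $\mathcal{E}=\{e\mid e^\top\Phi e\le1\}$, $\mathcal{E}_u=\{Ke\mid e\in\mathcal{E}\}$, and let $e^{(0)}$ be the trajectory of the error system $e^{(0)}(t+1)=(A+BK)e^{(0)}(t)+w^{(0)}(t)$, $e^{(0)}(0)=0$. Then: (i) $\Pr\{e^{(0)}(t)\in\mathcal{E}\ \forall t\in\{1,\dots,N\}\}\ge1-\theta$; (ii) $\mathrm{int}(\mathcal{X}_t\ominus\mathcal{E})\ne\emptyset$ for all $t\in\{1,\dots,N\}$; (iii) $\mathrm{int}(\mathcal{U}\ominus\mathcal{E}_u)\ne\emptyset$.
   Context: $Q^{1/2}$ denotes the symmetric positive definite square root of $Q$; $\succ,\succeq$ denote the Loewner order. The Pontryagin difference is $S_1\ominus S_2=\{s_1\mid s_1+s_2\in S_1\ \forall s_2\in S_2\}$ and $\mathrm{int}$ denotes the interior of a set. *)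

theory Defs
  imports "HOL-Probability.Probability"
begin

definition psd_mat :: "real^'n^'n \<Rightarrow> bool" where
  "psd_mat M \<longleftrightarrow> transpose M = M \<and> (\<forall>x. 0 \<le> x \<bullet> (M *v x))"

definition pd_mat :: "real^'n^'n \<Rightarrow> bool" where
  "pd_mat M \<longleftrightarrow> transpose M = M \<and> (\<forall>x. x \<noteq> 0 \<longrightarrow> 0 < x \<bullet> (M *v x))"

definition msqrt :: "real^'n^'n \<Rightarrow> real^'n^'n" where
  "msqrt Q = (THE S. pd_mat S \<and> S ** S = Q)"

definition block_mat ::
  "real^'n^'n \<Rightarrow> real^'m^'n \<Rightarrow> real^'n^'m \<Rightarrow> real^'m^'m \<Rightarrow> real^('n + 'm)^('n + 'm)" where
  "block_mat X Z V W = (\<chi> i j. case i of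
       Inl a \<Rightarrow> (case j of Inl b \<Rightarrow> X$a$b | Inr b \<Rightarrow> Z$a$b)
     | Inr a \<Rightarrow> (case j of Inl b \<Rightarrow> V$a$b | Inr b \<Rightarrow> W$a$b))"

definition pontryagin_diff :: "'a::ab_group_add set \<Rightarrow> 'a set \<Rightarrow> 'a set" where
  "pontryagin_diff S1 S2 = {s1. \<forall>s2\<in>S2. s1 + s2 \<in> S1}"

primrec err_traj :: "real^'n^'n \<Rightarrow> (nat \<Rightarrow> real^'n) \<Rightarrow> nat \<Rightarrow> real^'n" where
  "err_traj F w 0 = 0"
| "err_traj F w (Suc t) = F *v err_traj F w t + w t"

end

theory Submission
  imports Defs
begin

text \<open>
  The first LMI is an S-procedure certificate that the ellipsoid \<open>\<E> = {e. e \<bullet> \<Phi> e \<le> 1}\<close> is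
  robustly invariant under \<open>e \<mapsto> (A + B K) e + w\<close> for every disturbance \<open>w \<in> \<W>\<close>. Hence on the
  event that all disturbances lie in \<open>\<W>\<close> the whole error trajectory stays in \<open>\<E>\<close>, which gives (i).

  For (ii) and (iii), \<open>\<E>\<close> (resp. \<open>K \<E>\<close>) lies in a copy of \<open>\<X>\<^sub>t - p\<^sub>t\<close> (resp. \<open>\<U>\<close>) shrunk by a
  factor \<open>b < 1\<close>, which leaves room for a small concentric ellipsoid inside the Pontryagin
  difference. The strict inequalities \<open>\<Phi>\<^sup>-\<^sup>1 \<prec> P\<^sub>t\<^sup>-\<^sup>1\<close> and, via a Schur complement of the second LMI,
  \<open>\<Psi>\<^sup>T Q \<Psi> \<prec> \<Phi>\<^sup>-\<^sup>1\<close> become inequalities with a factor \<open>c < 1\<close> by compactness of the unit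
  sphere, and inversion reverses the Loewner order.

  The square root \<open>Q\<^sup>1\<^sup>/\<^sup>2\<close> in the second LMI is determined only once its existence and uniqueness
  are known; both follow from the spectral theorem, proved by maximising the Rayleigh quotient.
\<close>

lemma quadratic_form_scaleR:
  "(c *\<^sub>R x) \<bullet> (M *v (c *\<^sub>R x)) = c\<^sup>2 * (x \<bullet> (M *v (x::real^'n)))"
  by (simp add: matrix_vector_mult_scaleR power2_eq_square)

lemma continuous_on_quadratic_form: "continuous_on S (\<lambda>x::real^'n. x \<bullet> (M *v x))"
  by (intro continuous_intros linear_continuous_on matrix_vector_mul_bounded_linear)

lemma quadratic_form_le_from_sphere:
  fixes M R :: "real^'n^'n"
  assumes "\<And>y. norm y = 1 \<Longrightarrow> a * (y \<bullet> (R *v y)) \<le> y \<bullet> (M *v y)"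
  shows "a * (x \<bullet> (R *v x)) \<le> x \<bullet> (M *v x)"
proof (cases "x = 0")
  case False
  define n where "n = norm x"
  define y where "y = (1 / n) *\<^sub>R x"
  have "norm y = 1" and x: "x = n *\<^sub>R y" using False by (simp_all add: y_def n_def)
  have "a * (x \<bullet> (R *v x)) = n\<^sup>2 * (a * (y \<bullet> (R *v y)))"
    unfolding x quadratic_form_scaleR by simp
  also have "\<dots> \<le> n\<^sup>2 * (y \<bullet> (M *v y))" using assms[OF \<open>norm y = 1\<close>] by (simp add: mult_left_mono)
  also have "\<dots> = x \<bullet> (M *v x)" unfolding x quadratic_form_scaleR ..
  finally show ?thesis .
qed simp

lemma inner_matrix_vector_transpose: "(x::real^'n) \<bullet> (M *v y) = (transpose M *v x) \<bullet> y"
  by (metis dot_lmul_matrix transpose_matrix_vector)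

lemma inner_matrix_vector_symmetric:
  "transpose M = M \<Longrightarrow> (x::real^'n) \<bullet> (M *v y) = (M *v x) \<bullet> y"
  by (metis inner_matrix_vector_transpose)

lemma matrix_vector_mult_sum:
  "finite A \<Longrightarrow> (M::real^'n^'m) *v (\<Sum>a\<in>A. f a) = (\<Sum>a\<in>A. M *v f a)"
  by (induct rule: finite_induct) (simp_all add: matrix_vector_right_distrib)

lemma quadratic_form_cross_le:
  fixes M :: "real^'n^'n"
  assumes sym: "transpose M = M" and nonneg: "\<And>z. 0 \<le> z \<bullet> (M *v z)" and "0 < s"
  shows "2 * (x \<bullet> (M *v y)) \<le> s * (x \<bullet> (M *v x)) + (y \<bullet> (M *v y)) / s"
proof -
  have "y \<bullet> (M *v x) = (M *v y) \<bullet> x" by (rule inner_matrix_vector_symmetric[OF sym])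
  then have yx: "y \<bullet> (M *v x) = x \<bullet> (M *v y)" by (simp only: inner_commute)
  have "0 \<le> (s *\<^sub>R x - y) \<bullet> (M *v (s *\<^sub>R x - y))" by (rule nonneg)
  also have "\<dots> = s\<^sup>2 * (x \<bullet> (M *v x)) - 2 * s * (x \<bullet> (M *v y)) + y \<bullet> (M *v y)"
    using yx by (simp add: matrix_vector_mult_diff_distrib matrix_vector_mult_scaleR inner_diff_left
        inner_diff_right power2_eq_square algebra_simps)
  finally have "2 * s * (x \<bullet> (M *v y)) \<le> s\<^sup>2 * (x \<bullet> (M *v x)) + y \<bullet> (M *v y)" by simp
  then show ?thesis using \<open>0 < s\<close> by (simp add: field_simps power2_eq_square)
qed

lemma matrix_vector_mult_uminus: "(M::real^'n^'m) *v (- x) = - (M *v x)"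
  using matrix_vector_mult_scaleR[of M "-1" x] by simp

section \<open>Spectral theorem and positive definite square roots\<close>

lemma linear_le_quadratic_imp_zero:
  fixes a c :: real
  assumes "\<And>t. a * t \<le> c * t\<^sup>2"
  shows "a = 0"
proof (rule ccontr)
  assume "a \<noteq> 0"
  define s where "s = a\<^sup>2 / (2 * (\<bar>c\<bar> + 1))"
  define t where "t = a / (2 * (\<bar>c\<bar> + 1))"
  have s: "s > 0" using \<open>a \<noteq> 0\<close> by (simp add: s_def)
  have "a * t = s" by (simp add: s_def t_def power2_eq_square)
  moreover have "c * t\<^sup>2 \<le> \<bar>c\<bar> * t\<^sup>2" by (simp add: mult_right_mono)
  moreover have "\<bar>c\<bar> * t\<^sup>2 = s * (\<bar>c\<bar> / (2 * (\<bar>c\<bar> + 1)))"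
    by (simp add: s_def t_def power2_eq_square)
  moreover have "\<dots> < s" using s by (simp add: field_simps) (simp add: add_nonneg_pos)
  ultimately show False using assms[of t] s by linarith
qed

definition orthonormal_eigenvectors :: "real^'n^'n \<Rightarrow> (real^'n) set \<Rightarrow> bool" where
  "orthonormal_eigenvectors Q B \<longleftrightarrow> finite B \<and> pairwise orthogonal B \<and>
     (\<forall>b\<in>B. norm b = 1 \<and> Q *v b = (b \<bullet> (Q *v b)) *\<^sub>R b)"

lemma orthonormal_eigenvectors_card_le:
  fixes B :: "(real^'n) set"
  assumes "orthonormal_eigenvectors Q B"
  shows "card B \<le> CARD('n)"
proof -
  have "independent B"
    using assms unfolding orthonormal_eigenvectors_def
    by (intro pairwise_orthogonal_independent) auto
  then show ?thesis using independent_bound by fastforce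
qed

lemma orthonormal_eigenvectors_inner_sum:
  assumes "orthonormal_eigenvectors Q B" "c \<in> B"
  shows "(\<Sum>b\<in>B. g b *\<^sub>R b) \<bullet> c = g c"
proof -
  have "(\<Sum>b\<in>B. g b *\<^sub>R b) \<bullet> c = (\<Sum>b\<in>B. g b * (b \<bullet> c))"
    by (simp add: inner_sum_left)
  also have "\<dots> = (\<Sum>b\<in>B. if b = c then g c else 0)"
    using assms unfolding orthonormal_eigenvectors_def pairwise_def orthogonal_def
    by (intro sum.cong) (auto simp: norm_eq_1)
  also have "\<dots> = g c" using assms unfolding orthonormal_eigenvectors_def by simp
  finally show ?thesis .
qed

text \<open>Otherwise moving from \<open>v\<close> towards \<open>u = Q v - (v \<bullet> Q v) v\<close> would increase the
  Rayleigh quotient to first order.\<close>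
lemma rayleigh_maximiser_eigenvector:
  fixes Q :: "real^'n^'n"
  assumes sym: "transpose Q = Q" and T: "subspace T" "\<And>y. y \<in> T \<Longrightarrow> Q *v y \<in> T"
    and v: "v \<in> T" "norm v = 1"
    and max: "\<And>y. y \<in> T \<Longrightarrow> y \<bullet> (Q *v y) \<le> (v \<bullet> (Q *v v)) * (y \<bullet> y)"
  shows "Q *v v = (v \<bullet> (Q *v v)) *\<^sub>R v"
proof -
  define l where "l = v \<bullet> (Q *v v)"
  define u where "u = Q *v v - l *\<^sub>R v"
  have vv: "v \<bullet> v = 1" using v(2) by (simp add: norm_eq_1)
  have uT: "u \<in> T" unfolding u_def using T v(1) by (simp add: subspace_diff subspace_scale)
  have uv: "u \<bullet> v = 0"
    using vv by (simp add: u_def l_def inner_diff_left inner_commute[of "Q *v v"])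
  have uQv: "u \<bullet> (Q *v v) = u \<bullet> u"
    using uv by (simp add: u_def inner_diff_right)
  have vQu: "v \<bullet> (Q *v u) = u \<bullet> u"
    using uQv inner_matrix_vector_symmetric[OF sym] by (metis inner_commute)
  have "2 * (u \<bullet> u) * t \<le> (l * (u \<bullet> u) - u \<bullet> (Q *v u)) * t\<^sup>2" for t
  proof -
    have "v + t *\<^sub>R u \<in> T" using T v(1) uT by (simp add: subspace_add subspace_scale)
    then have le: "(v + t *\<^sub>R u) \<bullet> (Q *v (v + t *\<^sub>R u)) \<le> l * ((v + t *\<^sub>R u) \<bullet> (v + t *\<^sub>R u))"
      unfolding l_def by (rule max)
    have "(v + t *\<^sub>R u) \<bullet> (Q *v (v + t *\<^sub>R u)) = l + 2 * (u \<bullet> u) * t + (u \<bullet> (Q *v u)) * t\<^sup>2"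
      using uQv vQu unfolding l_def
      by (simp add: matrix_vector_right_distrib matrix_vector_mult_scaleR inner_add_left
          inner_add_right power2_eq_square algebra_simps)
    moreover have "(v + t *\<^sub>R u) \<bullet> (v + t *\<^sub>R u) = 1 + (u \<bullet> u) * t\<^sup>2"
      using uv vv by (simp add: inner_add_left inner_add_right inner_commute power2_eq_square)
    ultimately show ?thesis using le by (simp add: algebra_simps)
  qed
  then have "2 * (u \<bullet> u) = 0" by (rule linear_le_quadratic_imp_zero)
  then show ?thesis by (simp add: u_def l_def)
qed

lemma invariant_subspace_eigenvector:
  fixes Q :: "real^'n^'n"
  assumes sym: "transpose Q = Q" and T: "subspace T" "\<And>y. y \<in> T \<Longrightarrow> Q *v y \<in> T"
    and r: "r \<in> T" "r \<noteq> 0"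
  obtains v where "v \<in> T" "norm v = 1" "Q *v v = (v \<bullet> (Q *v v)) *\<^sub>R v"
proof -
  let ?K = "T \<inter> sphere 0 1"
  have "compact ?K" using closed_subspace[OF T(1)] by (intro closed_Int_compact compact_sphere)
  moreover have "(1 / norm r) *\<^sub>R r \<in> ?K" using T(1) r by (simp add: subspace_scale)
  then have "?K \<noteq> {}" by blast
  ultimately obtain v where vK: "v \<in> ?K" and vmax: "\<forall>y\<in>?K. y \<bullet> (Q *v y) \<le> v \<bullet> (Q *v v)"
    using continuous_attains_sup[OF _ _ continuous_on_quadratic_form] by blast
  then have v: "v \<in> T" "norm v = 1" by auto
  have "y \<bullet> (Q *v y) \<le> (v \<bullet> (Q *v v)) * (y \<bullet> y)" if "y \<in> T" for y
  proof (cases "y = 0")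
    case False
    have "(1 / norm y) *\<^sub>R y \<in> ?K" using T(1) that False by (simp add: subspace_scale)
    then have "(1 / norm y)\<^sup>2 * (y \<bullet> (Q *v y)) \<le> v \<bullet> (Q *v v)"
      using vmax quadratic_form_scaleR[of "1 / norm y" y Q] by metis
    then show ?thesis using False by (simp add: field_simps dot_square_norm)
  qed simp
  then have "Q *v v = (v \<bullet> (Q *v v)) *\<^sub>R v"
    using rayleigh_maximiser_eigenvector[OF sym T v] by blast
  with v that show ?thesis by blast
qed

lemma orthonormal_eigenvectors_insert:
  fixes Q :: "real^'n^'n"
  assumes sym: "transpose Q = Q" and B: "orthonormal_eigenvectors Q B"
    and r: "r \<noteq> 0" "\<forall>c\<in>B. orthogonal c r"
  obtains v where "v \<notin> B" "orthonormal_eigenvectors Q (insert v B)"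
proof -
  define T where "T = {y. \<forall>c\<in>B. orthogonal c y}"
  have "subspace T" unfolding T_def by (rule subspace_orthogonal_to_vectors)
  have "Q *v y \<in> T" if "y \<in> T" for y
  proof -
    have "c \<bullet> (Q *v y) = (c \<bullet> (Q *v c)) * (c \<bullet> y)" if "c \<in> B" for c
      using B that inner_matrix_vector_symmetric[OF sym, of c y]
      unfolding orthonormal_eigenvectors_def by (metis inner_scaleR_left)
    then show ?thesis using \<open>y \<in> T\<close> by (simp add: T_def orthogonal_def)
  qed
  moreover have "r \<in> T" using r(2) by (simp add: T_def)
  ultimately obtain v where v: "v \<in> T" "norm v = 1" "Q *v v = (v \<bullet> (Q *v v)) *\<^sub>R v"
    using invariant_subspace_eigenvector[OF sym \<open>subspace T\<close> _ _ r(1)] by blast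
  then have "v \<notin> B" by (auto simp: T_def orthogonal_def norm_eq_1)
  moreover have "orthonormal_eigenvectors Q (insert v B)"
    using B v unfolding orthonormal_eigenvectors_def pairwise_insert T_def
    by (auto simp: orthogonal_commute)
  ultimately show ?thesis using that by blast
qed

theorem symmetric_matrix_orthonormal_eigenbasis:
  fixes Q :: "real^'n^'n"
  assumes sym: "transpose Q = Q"
  obtains B where "orthonormal_eigenvectors Q B" "\<And>x. x = (\<Sum>b\<in>B. (x \<bullet> b) *\<^sub>R b)"
proof -
  have "orthonormal_eigenvectors Q {}" by (simp add: orthonormal_eigenvectors_def)
  moreover have "\<forall>B. orthonormal_eigenvectors Q B \<longrightarrow> card B < CARD('n) + 1"
    using orthonormal_eigenvectors_card_le by fastforce
  ultimately obtain B where B: "orthonormal_eigenvectors Q B"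
    and greatest: "\<And>B'. orthonormal_eigenvectors Q B' \<Longrightarrow> card B' \<le> card B"
    using ex_has_greatest_nat[of "orthonormal_eigenvectors Q" "{}" card] by blast
  have "x = (\<Sum>b\<in>B. (x \<bullet> b) *\<^sub>R b)" for x
  proof (rule ccontr)
    define r where "r = x - (\<Sum>b\<in>B. (x \<bullet> b) *\<^sub>R b)"
    assume "x \<noteq> (\<Sum>b\<in>B. (x \<bullet> b) *\<^sub>R b)"
    then have "r \<noteq> 0" by (simp add: r_def)
    moreover have "\<forall>c\<in>B. orthogonal c r"
      using orthonormal_eigenvectors_inner_sum[OF B]
      by (simp add: r_def orthogonal_def inner_diff_right inner_commute)
    ultimately obtain v where "v \<notin> B" "orthonormal_eigenvectors Q (insert v B)"
      using orthonormal_eigenvectors_insert[OF sym B] by blast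
    then show False
      using greatest[of "insert v B"] B unfolding orthonormal_eigenvectors_def by simp
  qed
  then show ?thesis using that B by blast
qed

lemma orthonormal_eigenvectors_sum_inner_scaleR:
  assumes "orthonormal_eigenvectors Q B" "b \<in> B"
  shows "(\<Sum>c\<in>B. (g c * (c \<bullet> b)) *\<^sub>R c) = g b *\<^sub>R b"
proof -
  have "(\<Sum>c\<in>B. (g c * (c \<bullet> b)) *\<^sub>R c) = (\<Sum>c\<in>B. if c = b then g b *\<^sub>R b else 0)"
    using assms unfolding orthonormal_eigenvectors_def pairwise_def orthogonal_def
    by (intro sum.cong) (auto simp: norm_eq_1)
  also have "\<dots> = g b *\<^sub>R b" using assms unfolding orthonormal_eigenvectors_def by simp
  finally show ?thesis .
qed

lemma matrix_eq_on_basis_expansion: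
  fixes R S :: "real^'n^'m"
  assumes "finite B" "\<And>x. x = (\<Sum>b\<in>B. (x \<bullet> b) *\<^sub>R b)" "\<And>b. b \<in> B \<Longrightarrow> R *v b = S *v b"
  shows "R = S"
  unfolding matrix_eq
proof
  fix x
  have expand: "M *v x = (\<Sum>b\<in>B. (x \<bullet> b) *\<^sub>R (M *v b))" for M :: "real^'n^'m"
  proof -
    have "M *v x = M *v (\<Sum>b\<in>B. (x \<bullet> b) *\<^sub>R b)" by (rule arg_cong[OF assms(2)])
    also have "\<dots> = (\<Sum>b\<in>B. (x \<bullet> b) *\<^sub>R (M *v b))"
      by (simp add: matrix_vector_mult_sum[OF assms(1)] matrix_vector_mult_scaleR)
    finally show ?thesis .
  qed
  show "R *v x = S *v x" unfolding expand using assms(3) by simp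
qed

definition spectral_sqrt :: "real^'n^'n \<Rightarrow> (real^'n) set \<Rightarrow> real^'n^'n" where
  "spectral_sqrt Q B = (\<chi> i j. \<Sum>b\<in>B. sqrt (b \<bullet> (Q *v b)) * b$i * b$j)"

lemma spectral_sqrt_mult_vector:
  "finite B \<Longrightarrow> spectral_sqrt Q B *v x = (\<Sum>b\<in>B. (sqrt (b \<bullet> (Q *v b)) * (b \<bullet> x)) *\<^sub>R b)"
  unfolding vec_eq_iff
  by (simp add: matrix_vector_mult_def spectral_sqrt_def inner_vec_def sum_distrib_left
      sum_distrib_right sum.swap[of _ B] mult_ac)

lemma transpose_spectral_sqrt: "transpose (spectral_sqrt Q B) = spectral_sqrt Q B"
  unfolding spectral_sqrt_def transpose_def vec_eq_iff by (simp add: mult_ac)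

lemma pd_sqrt_exists:
  fixes Q :: "real^'n^'n"
  assumes "pd_mat Q"
  shows "\<exists>S. pd_mat S \<and> S ** S = Q"
proof -
  obtain B where B: "orthonormal_eigenvectors Q B" and basis: "\<And>x. x = (\<Sum>b\<in>B. (x \<bullet> b) *\<^sub>R b)"
    using symmetric_matrix_orthonormal_eigenbasis assms unfolding pd_mat_def by blast
  have fin: "finite B" using B orthonormal_eigenvectors_def by blast
  define S where "S = spectral_sqrt Q B"
  have eigenvalue_pos: "0 < b \<bullet> (Q *v b)" if "b \<in> B" for b
  proof -
    have "b \<noteq> 0" using B that unfolding orthonormal_eigenvectors_def by auto
    then show ?thesis using assms unfolding pd_mat_def by blast
  qed
  have Sb: "S *v b = sqrt (b \<bullet> (Q *v b)) *\<^sub>R b" if "b \<in> B" for b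
    unfolding S_def spectral_sqrt_mult_vector[OF fin]
    by (rule orthonormal_eigenvectors_sum_inner_scaleR[OF B that])
  have "(S ** S) *v b = Q *v b" if "b \<in> B" for b
    using B that eigenvalue_pos[OF that] unfolding orthonormal_eigenvectors_def
    by (simp add: matrix_vector_mul_assoc[symmetric] Sb matrix_vector_mult_scaleR)
  then have "S ** S = Q" by (rule matrix_eq_on_basis_expansion[OF fin basis])
  moreover have "pd_mat S"
    unfolding pd_mat_def
  proof (intro conjI allI impI)
    show "transpose S = S" unfolding S_def by (rule transpose_spectral_sqrt)
    fix x :: "real^'n" assume "x \<noteq> 0"
    moreover have "x = 0" if "\<forall>c\<in>B. c \<bullet> x = 0"
      using basis[of x] that by (simp add: inner_commute)
    ultimately obtain c where c: "c \<in> B" "c \<bullet> x \<noteq> 0" by blast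
    have "x \<bullet> (S *v x) = (\<Sum>b\<in>B. sqrt (b \<bullet> (Q *v b)) * (b \<bullet> x)\<^sup>2)"
      unfolding S_def spectral_sqrt_mult_vector[OF fin]
      by (simp add: inner_sum_right power2_eq_square inner_commute mult.assoc)
    also have "\<dots> > 0"
      using c eigenvalue_pos by (intro sum_pos2[OF fin c(1)]) (auto simp: less_imp_le)
    finally show "0 < x \<bullet> (S *v x)" .
  qed
  ultimately show ?thesis by blast
qed

text \<open>\<open>(R + sqrt \<mu>) (R b - sqrt \<mu> b) = (Q - \<mu>) b = 0\<close>, and \<open>R + sqrt \<mu>\<close> is positive definite.\<close>
lemma pd_sqrt_eigenvector:
  fixes R Q :: "real^'n^'n"
  assumes R: "pd_mat R" "R ** R = Q" and b: "Q *v b = \<mu> *\<^sub>R b" and "0 \<le> \<mu>"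
  shows "R *v b = sqrt \<mu> *\<^sub>R b"
proof (rule ccontr)
  define u where "u = R *v b - sqrt \<mu> *\<^sub>R b"
  assume "R *v b \<noteq> sqrt \<mu> *\<^sub>R b"
  then have "u \<noteq> 0" by (simp add: u_def)
  have "R *v u = - sqrt \<mu> *\<^sub>R u"
    using R(2) b \<open>0 \<le> \<mu>\<close> unfolding u_def
    by (simp add: matrix_vector_mul_assoc matrix_vector_mult_diff_distrib matrix_vector_mult_scaleR
        algebra_simps)
  then have "u \<bullet> (R *v u) \<le> 0" using \<open>0 \<le> \<mu>\<close> by simp
  with R(1) \<open>u \<noteq> 0\<close> show False unfolding pd_mat_def by (meson not_less)
qed

lemma pd_sqrt_unique:
  fixes Q R S :: "real^'n^'n"
  assumes Q: "pd_mat Q" and R: "pd_mat R" "R ** R = Q" and S: "pd_mat S" "S ** S = Q"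
  shows "R = S"
proof -
  obtain B where B: "orthonormal_eigenvectors Q B" and basis: "\<And>x. x = (\<Sum>b\<in>B. (x \<bullet> b) *\<^sub>R b)"
    using symmetric_matrix_orthonormal_eigenbasis Q unfolding pd_mat_def by blast
  have "R *v b = S *v b" if "b \<in> B" for b
  proof -
    have eigen: "Q *v b = (b \<bullet> (Q *v b)) *\<^sub>R b" and "b \<noteq> 0"
      using B that unfolding orthonormal_eigenvectors_def by auto
    then have "0 \<le> b \<bullet> (Q *v b)"
      using Q unfolding pd_mat_def by (auto intro: less_imp_le)
    then show ?thesis
      using pd_sqrt_eigenvector[OF R eigen] pd_sqrt_eigenvector[OF S eigen] by simp
  qed
  then show ?thesis
    using B basis matrix_eq_on_basis_expansion unfolding orthonormal_eigenvectors_def by blast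
qed

lemma pd_mat_msqrt:
  fixes Q :: "real^'n^'n"
  assumes "pd_mat Q"
  shows "pd_mat (msqrt Q)" "msqrt Q ** msqrt Q = Q"
proof -
  have "\<exists>!S. pd_mat S \<and> S ** S = Q"
    using pd_sqrt_exists[OF assms] pd_sqrt_unique[OF assms] by blast
  then have "pd_mat (msqrt Q) \<and> msqrt Q ** msqrt Q = Q"
    unfolding msqrt_def by (rule theI')
  then show "pd_mat (msqrt Q)" "msqrt Q ** msqrt Q = Q" by auto
qed

lemma pd_mat_nonneg: "pd_mat M \<Longrightarrow> 0 \<le> x \<bullet> (M *v x)"
  unfolding pd_mat_def by (cases "x = 0") (auto intro: less_imp_le)

lemma pd_mat_invertible:
  fixes M :: "real^'n^'n"
  assumes "pd_mat M"
  shows "invertible M"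
proof -
  have "x = 0" if "M *v x = 0" for x
  proof (rule ccontr)
    assume "x \<noteq> 0"
    then have "0 < x \<bullet> (M *v x)" using assms unfolding pd_mat_def by blast
    with that show False by simp
  qed
  then have "\<exists>M'. M' ** M = mat 1" by (subst matrix_left_invertible_ker) blast
  then show ?thesis by (subst invertible_left_inverse)
qed

lemma pd_mat_matrix_inv:
  fixes M :: "real^'n^'n"
  assumes "pd_mat M"
  shows "M ** matrix_inv M = mat 1" "matrix_inv M ** M = mat 1"
proof -
  obtain M' where "M ** M' = mat 1 \<and> M' ** M = mat 1"
    using pd_mat_invertible[OF assms] unfolding invertible_def by blast
  then have "M ** matrix_inv M = mat 1 \<and> matrix_inv M ** M = mat 1"
    unfolding matrix_inv_def by (rule someI)
  then show "M ** matrix_inv M = mat 1" "matrix_inv M ** M = mat 1" by auto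
qed

lemma pd_mat_matrix_inv_mult_vector:
  fixes M :: "real^'n^'n"
  assumes "pd_mat M"
  shows "M *v (matrix_inv M *v x) = x" "matrix_inv M *v (M *v x) = x"
  using pd_mat_matrix_inv[OF assms] by (simp_all add: matrix_vector_mul_assoc)

lemma pd_mat_matrix_inv_pd:
  fixes M :: "real^'n^'n"
  assumes "pd_mat M"
  shows "pd_mat (matrix_inv M)"
  unfolding pd_mat_def
proof (intro conjI allI impI)
  have sym: "transpose M = M" using assms pd_mat_def by blast
  have "transpose (matrix_inv M) = transpose (matrix_inv M) ** (M ** matrix_inv M)"
    using pd_mat_matrix_inv(1)[OF assms] by simp
  also have "\<dots> = transpose (M ** matrix_inv M) ** matrix_inv M"
    by (simp add: matrix_mul_assoc matrix_transpose_mul sym)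
  finally show "transpose (matrix_inv M) = matrix_inv M"
    using pd_mat_matrix_inv(1)[OF assms] by simp
  fix x :: "real^'n" assume "x \<noteq> 0"
  define y where "y = matrix_inv M *v x"
  have Myx: "M *v y = x" using pd_mat_matrix_inv_mult_vector[OF assms] by (simp add: y_def)
  then have "y \<noteq> 0" using \<open>x \<noteq> 0\<close> by auto
  then have "0 < y \<bullet> (M *v y)" using assms unfolding pd_mat_def by blast
  also have "y \<bullet> (M *v y) = x \<bullet> (matrix_inv M *v x)"
    unfolding Myx by (simp add: y_def inner_commute)
  finally show "0 < x \<bullet> (matrix_inv M *v x)" .
qed

lemma inner_le_pd_dual_quadratic_forms:
  fixes Y :: "real^'n^'n"
  assumes Y: "pd_mat Y" and "0 < s"
  shows "2 * (z \<bullet> w) \<le> s * (w \<bullet> (Y *v w)) + (z \<bullet> (matrix_inv Y *v z)) / s"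
proof -
  have sym: "transpose (matrix_inv Y) = matrix_inv Y"
    using pd_mat_matrix_inv_pd[OF Y] unfolding pd_mat_def by blast
  have Yw: "matrix_inv Y *v (Y *v w) = w" by (rule pd_mat_matrix_inv_mult_vector(2)[OF Y])
  have "2 * ((Y *v w) \<bullet> (matrix_inv Y *v z))
      \<le> s * ((Y *v w) \<bullet> (matrix_inv Y *v (Y *v w))) + (z \<bullet> (matrix_inv Y *v z)) / s"
    by (rule quadratic_form_cross_le[OF sym pd_mat_nonneg[OF pd_mat_matrix_inv_pd[OF Y]] \<open>0 < s\<close>])
  moreover have "(Y *v w) \<bullet> (matrix_inv Y *v z) = z \<bullet> w"
    using inner_matrix_vector_symmetric[OF sym, of "Y *v w" z] Yw by (simp add: inner_commute)
  ultimately show ?thesis by (simp add: Yw inner_commute)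
qed

section \<open>Robust invariance of the error ellipsoid\<close>

definition block_vec :: "real^'n \<Rightarrow> real^'m \<Rightarrow> real^('n + 'm)" where
  "block_vec a b = (\<chi> i. case i of Inl k \<Rightarrow> a$k | Inr k \<Rightarrow> b$k)"

lemma block_vec_eq_0_iff: "block_vec a b = 0 \<longleftrightarrow> a = 0 \<and> b = 0"
  unfolding block_vec_def vec_eq_iff by (auto split: sum.splits)

lemma sum_UNIV_sum_type:
  "(\<Sum>i\<in>(UNIV::('n::finite + 'm::finite) set). f i) = (\<Sum>k\<in>UNIV. f (Inl k)) + (\<Sum>k\<in>UNIV. f (Inr k))"
  using sum.Plus[of "UNIV :: 'n set" "UNIV :: 'm set" f] by (simp add: UNIV_Plus_UNIV comp_def)

lemma block_mat_quadratic_form: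
  fixes X :: "real^'n^'n" and Z :: "real^'m^'n" and V :: "real^'n^'m" and W :: "real^'m^'m"
  shows "block_vec a b \<bullet> (block_mat X Z V W *v block_vec a b) =
     a \<bullet> (X *v a) + a \<bullet> (Z *v b) + b \<bullet> (V *v a) + b \<bullet> (W *v b)"
  unfolding inner_vec_def matrix_vector_mult_def block_mat_def block_vec_def
  by (simp add: sum_UNIV_sum_type sum.distrib distrib_left)

text \<open>The S-procedure behind the first LMI: evaluating its quadratic form at
  \<open>(\<Phi> x, -\<Phi> e)\<close> with \<open>x = F e + w\<close> and bounding the cross term \<open>2 \<Phi> x \<bullet> w\<close> by
  \<open>\<lambda>\<^sub>1 w \<bullet> Y w + \<Phi> x \<bullet> Y\<^sup>-\<^sup>1 \<Phi> x / \<lambda>\<^sub>1\<close> gives \<open>x \<bullet> \<Phi> x \<le> \<lambda>\<^sub>1 w \<bullet> Y w + \<lambda>\<^sub>0 e \<bullet> \<Phi> e\<close>.\<close>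
lemma lmi_ellipsoid_invariant:
  fixes A Phat Y :: "real^'n^'n" and B :: "real^'m^'n" and Psi :: "real^'n^'m"
  defines "\<Phi> \<equiv> matrix_inv Phat"
  defines "F \<equiv> A + B ** (Psi ** matrix_inv Phat)"
  assumes Phat_pd: "pd_mat Phat" and Y_pd: "pd_mat Y"
    and lam: "lam0 \<ge> 0" "lam1 > 0" "1 - lam0 - lam1 \<ge> 0"
    and lmi: "psd_mat (block_mat (Phat - (1 / lam1) *\<^sub>R matrix_inv Y) (A ** Phat + B ** Psi)
                                 (transpose (A ** Phat + B ** Psi)) (lam0 *\<^sub>R Phat))"
    and e: "e \<bullet> (\<Phi> *v e) \<le> 1" and w: "w \<bullet> (Y *v w) \<le> 1"
  shows "(F *v e + w) \<bullet> (\<Phi> *v (F *v e + w)) \<le> 1"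
proof -
  define G where "G = A ** Phat + B ** Psi"
  define Yi where "Yi = matrix_inv Y"
  define x where "x = F *v e + w"
  define z where "z = \<Phi> *v x"
  define q where "q = x \<bullet> (\<Phi> *v x)"
  define c where "c = z \<bullet> (Yi *v z)"
  have "G *v (\<Phi> *v e) = F *v e"
    using pd_mat_matrix_inv_mult_vector(1)[OF Phat_pd, of e]
    by (simp add: G_def F_def \<Phi>_def matrix_vector_mult_add_rdistrib
        matrix_vector_mul_assoc[symmetric])
  then have Ge: "G *v (- (\<Phi> *v e)) = - (F *v e)" by (simp add: matrix_vector_mult_uminus)
  have Phat_z: "Phat *v z = x"
    unfolding z_def \<Phi>_def by (rule pd_mat_matrix_inv_mult_vector(1)[OF Phat_pd])
  have zx: "z \<bullet> x = q" by (simp add: z_def q_def inner_commute)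
  have "0 \<le> block_vec z (- (\<Phi> *v e)) \<bullet>
      (block_mat (Phat - (1 / lam1) *\<^sub>R Yi) G (transpose G) (lam0 *\<^sub>R Phat) *v block_vec z (- (\<Phi> *v e)))"
    using lmi unfolding psd_mat_def Yi_def G_def by blast
  also have "\<dots> = q - c / lam1 - 2 * (z \<bullet> (F *v e)) + lam0 * (e \<bullet> (\<Phi> *v e))"
  proof -
    have "- (\<Phi> *v e) \<bullet> (transpose G *v z) = - (z \<bullet> (F *v e))"
      using inner_matrix_vector_transpose[of "- (\<Phi> *v e)" "transpose G" z] Ge
      by (simp add: inner_commute)
    moreover have "Phat *v (\<Phi> *v e) = e"
      unfolding \<Phi>_def by (rule pd_mat_matrix_inv_mult_vector(1)[OF Phat_pd])
    ultimately show ?thesis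
      unfolding block_mat_quadratic_form using Ge Phat_z zx
      by (simp add: matrix_vector_mult_diff_rdistrib scaleR_matrix_vector_assoc[symmetric]
          inner_diff_right c_def inner_commute matrix_vector_mult_uminus)
  qed
  also have "z \<bullet> (F *v e) = q - z \<bullet> w" using zx by (simp add: x_def inner_add_right)
  finally have q_le: "q \<le> 2 * (z \<bullet> w) - c / lam1 + lam0 * (e \<bullet> (\<Phi> *v e))" by simp
  have "2 * (z \<bullet> w) \<le> lam1 * (w \<bullet> (Y *v w)) + c / lam1"
    unfolding c_def Yi_def by (rule inner_le_pd_dual_quadratic_forms[OF Y_pd lam(2)])
  with q_le have "q \<le> lam1 * (w \<bullet> (Y *v w)) + lam0 * (e \<bullet> (\<Phi> *v e))" by simp
  also have "\<dots> \<le> lam1 + lam0"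
    using lam e w by (intro add_mono) (simp_all add: mult_left_le)
  finally show ?thesis using lam unfolding q_def x_def by simp
qed

section \<open>Pontryagin differences of ellipsoids\<close>

lemma pd_block_identity_schur:
  fixes X :: "real^'n^'n" and V :: "real^'n^'m"
  assumes "pd_mat (block_mat X (transpose V) V (mat 1))" "a \<noteq> 0"
  shows "(V *v a) \<bullet> (V *v a) < a \<bullet> (X *v a)"
proof -
  define b where "b = - (V *v a)"
  have "0 < block_vec a b \<bullet> (block_mat X (transpose V) V (mat 1) *v block_vec a b)"
    using assms unfolding pd_mat_def by (simp add: block_vec_eq_0_iff)
  also have "\<dots> = a \<bullet> (X *v a) - (V *v a) \<bullet> (V *v a)"
    unfolding block_mat_quadratic_form inner_matrix_vector_transpose[of a "transpose V"]
    by (simp add: b_def inner_commute)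
  finally show ?thesis by simp
qed

lemma quadratic_form_bounded_by_pd:
  fixes M R :: "real^'n^'n"
  assumes pos: "\<And>x. x \<noteq> 0 \<Longrightarrow> 0 < x \<bullet> (M *v x)"
  obtains \<eta> where "\<eta> > 0" "\<And>x. \<eta> * (x \<bullet> (R *v x)) \<le> x \<bullet> (M *v x)"
proof -
  let ?S = "sphere (0::real^'n) 1"
  have "axis undefined 1 \<in> ?S" by simp
  then have "?S \<noteq> {}" by blast
  obtain xm where xm: "xm \<in> ?S" "\<forall>y\<in>?S. xm \<bullet> (M *v xm) \<le> y \<bullet> (M *v y)"
    using continuous_attains_inf[OF compact_sphere \<open>?S \<noteq> {}\<close> continuous_on_quadratic_form] by blast
  obtain xM where xM: "\<forall>y\<in>?S. y \<bullet> (R *v y) \<le> xM \<bullet> (R *v xM)"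
    using continuous_attains_sup[OF compact_sphere \<open>?S \<noteq> {}\<close> continuous_on_quadratic_form] by blast
  define m where "m = xm \<bullet> (M *v xm)"
  define C where "C = xM \<bullet> (R *v xM)"
  have "m > 0" unfolding m_def using xm(1) by (intro pos) auto
  define \<eta> where "\<eta> = m / (\<bar>C\<bar> + 1)"
  have "\<eta> > 0" using \<open>m > 0\<close> by (simp add: \<eta>_def)
  have "\<eta> * C \<le> \<eta> * (\<bar>C\<bar> + 1)" using \<open>\<eta> > 0\<close> by (intro mult_left_mono) auto
  also have "\<dots> = m" by (simp add: \<eta>_def)
  finally have "\<eta> * C \<le> m" .
  have "\<eta> * (y \<bullet> (R *v y)) \<le> y \<bullet> (M *v y)" if "norm y = 1" for y
  proof -
    have "\<eta> * (y \<bullet> (R *v y)) \<le> \<eta> * C"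
      using xM that \<open>\<eta> > 0\<close> unfolding C_def by (intro mult_left_mono) auto
    also have "\<dots> \<le> m" by fact
    also have "\<dots> \<le> y \<bullet> (M *v y)" using xm(2) that unfolding m_def by auto
    finally show ?thesis .
  qed
  then have "\<eta> * (x \<bullet> (R *v x)) \<le> x \<bullet> (M *v x)" for x
    by (rule quadratic_form_le_from_sphere)
  with \<open>\<eta> > 0\<close> that show ?thesis by blast
qed

lemma quadratic_form_strict_le_scaled:
  fixes M R :: "real^'n^'n"
  assumes less: "\<And>x. x \<noteq> 0 \<Longrightarrow> x \<bullet> (R *v x) < x \<bullet> (M *v x)" and nonneg: "\<And>x. 0 \<le> x \<bullet> (M *v x)"
  obtains c where "0 < c" "c < 1" "\<And>x. x \<bullet> (R *v x) \<le> c * (x \<bullet> (M *v x))"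
proof -
  have "0 < x \<bullet> ((M - R) *v x)" if "x \<noteq> 0" for x
    using less[OF that] by (simp add: matrix_vector_mult_diff_rdistrib inner_diff_right)
  then obtain \<eta> where "\<eta> > 0" and \<eta>: "\<And>x. \<eta> * (x \<bullet> (M *v x)) \<le> x \<bullet> ((M - R) *v x)"
    using quadratic_form_bounded_by_pd by blast
  define c where "c = max (1 - \<eta>) (1 / 2)"
  have "x \<bullet> (R *v x) \<le> c * (x \<bullet> (M *v x))" for x
  proof -
    have "x \<bullet> (R *v x) \<le> (1 - \<eta>) * (x \<bullet> (M *v x))"
      using \<eta>[of x] by (simp add: matrix_vector_mult_diff_rdistrib inner_diff_right algebra_simps)
    also have "\<dots> \<le> c * (x \<bullet> (M *v x))"
      using nonneg[of x] by (intro mult_right_mono) (simp_all add: c_def)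
    finally show ?thesis .
  qed
  moreover have "0 < c" "c < 1" using \<open>\<eta> > 0\<close> by (auto simp: c_def)
  ultimately show ?thesis using that by blast
qed

lemma loewner_le_matrix_inv:
  fixes A B :: "real^'n^'n"
  assumes A: "pd_mat A" and B: "pd_mat B" and "0 < c"
    and le: "\<And>z. z \<bullet> (A *v z) \<le> c * (z \<bullet> (matrix_inv B *v z))"
  shows "x \<bullet> (B *v x) \<le> c * (x \<bullet> (matrix_inv A *v x))"
proof -
  define z where "z = B *v x"
  define r where "r = x \<bullet> (B *v x)"
  have Binv: "z \<bullet> (matrix_inv B *v z) = r"
    unfolding z_def r_def pd_mat_matrix_inv_mult_vector(2)[OF B] by (simp add: inner_commute)
  have "transpose (matrix_inv A) = matrix_inv A" "\<And>v. 0 \<le> v \<bullet> (matrix_inv A *v v)"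
    using pd_mat_matrix_inv_pd[OF A] pd_mat_nonneg unfolding pd_mat_def by blast+
  then have "2 * ((A *v z) \<bullet> (matrix_inv A *v x))
      \<le> (1 / c) * ((A *v z) \<bullet> (matrix_inv A *v (A *v z))) + (x \<bullet> (matrix_inv A *v x)) / (1 / c)"
    by (rule quadratic_form_cross_le) (simp add: \<open>0 < c\<close>)
  moreover have "(A *v z) \<bullet> (matrix_inv A *v x) = r"
    using inner_matrix_vector_symmetric[OF \<open>transpose (matrix_inv A) = matrix_inv A\<close>, of "A *v z" x]
    by (simp add: pd_mat_matrix_inv_mult_vector(2)[OF A] z_def r_def inner_commute)
  moreover have "(1 / c) * ((A *v z) \<bullet> (matrix_inv A *v (A *v z))) \<le> (1 / c) * (c * r)"
    using le[of z] Binv \<open>0 < c\<close>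
    by (intro mult_left_mono) (simp_all add: pd_mat_matrix_inv_mult_vector(2)[OF A] inner_commute)
  ultimately have "2 * r \<le> r + c * (x \<bullet> (matrix_inv A *v x))"
    using \<open>0 < c\<close> by (simp add: mult.commute[of c])
  then show ?thesis unfolding r_def by simp
qed

lemma quadratic_form_add_le:
  fixes P :: "real^'n^'n"
  assumes P: "pd_mat P" and "0 < a" "0 < b"
    and d: "d \<bullet> (P *v d) \<le> a\<^sup>2" and e: "e \<bullet> (P *v e) \<le> b\<^sup>2"
  shows "(d + e) \<bullet> (P *v (d + e)) \<le> (a + b)\<^sup>2"
proof -
  have sym: "transpose P = P" using P pd_mat_def by blast
  have "e \<bullet> (P *v d) = (P *v e) \<bullet> d" by (rule inner_matrix_vector_symmetric[OF sym])
  then have ed: "e \<bullet> (P *v d) = d \<bullet> (P *v e)" by (simp only: inner_commute)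
  have "2 * (d \<bullet> (P *v e)) \<le> (b / a) * (d \<bullet> (P *v d)) + (e \<bullet> (P *v e)) / (b / a)"
    using \<open>0 < a\<close> \<open>0 < b\<close> by (intro quadratic_form_cross_le[OF sym pd_mat_nonneg[OF P]]) simp
  also have "\<dots> \<le> (b / a) * a\<^sup>2 + b\<^sup>2 / (b / a)"
    using \<open>0 < a\<close> \<open>0 < b\<close> d e by (intro add_mono mult_left_mono divide_right_mono) auto
  also have "\<dots> = 2 * a * b" using \<open>0 < a\<close> \<open>0 < b\<close> by (simp add: field_simps power2_eq_square)
  finally have "2 * (d \<bullet> (P *v e)) \<le> 2 * a * b" .
  then show ?thesis
    using d e ed by (simp add: matrix_vector_right_distrib inner_add_left inner_add_right power2_sum)
qed

text \<open>The witness is the concentric open ellipsoid of radius \<open>1 - b\<close>.\<close>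
lemma interior_pontryagin_diff_ellipsoid:
  fixes P :: "real^'n^'n"
  assumes P: "pd_mat P" and b: "0 < b" "b < 1" and E: "\<And>e. e \<in> E \<Longrightarrow> e \<bullet> (P *v e) \<le> b\<^sup>2"
  shows "interior (pontryagin_diff {x. (x - p) \<bullet> (P *v (x - p)) \<le> 1} E) \<noteq> {}"
proof -
  let ?T = "{x. (x - p) \<bullet> (P *v (x - p)) < (1 - b)\<^sup>2}"
  have "open ?T"
    by (intro open_Collect_less continuous_intros linear_continuous_on matrix_vector_mul_bounded_linear
        continuous_on_compose2[OF linear_continuous_on[OF matrix_vector_mul_bounded_linear]]) auto
  moreover have "?T \<subseteq> pontryagin_diff {x. (x - p) \<bullet> (P *v (x - p)) \<le> 1} E"
  proof (clarsimp simp: pontryagin_diff_def)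
    fix x e assume "(x - p) \<bullet> (P *v (x - p)) < (1 - b)\<^sup>2" "e \<in> E"
    then have "((x - p) + e) \<bullet> (P *v ((x - p) + e)) \<le> ((1 - b) + b)\<^sup>2"
      using b by (intro quadratic_form_add_le[OF P] E) auto
    then show "(x + e - p) \<bullet> (P *v (x + e - p)) \<le> 1" by (simp add: algebra_simps)
  qed
  ultimately have "?T \<subseteq> interior (pontryagin_diff {x. (x - p) \<bullet> (P *v (x - p)) \<le> 1} E)"
    by (rule interior_maximal[rotated])
  moreover have "p \<in> ?T" using b by simp
  ultimately show ?thesis by blast
qed

lemma interior_pontryagin_diff_nested_ellipsoid:
  fixes P Phat :: "real^'n^'n"
  assumes P: "pd_mat P" and Phat: "pd_mat Phat" and gap: "pd_mat (matrix_inv P - Phat)"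
  shows "interior (pontryagin_diff {x. (x - p) \<bullet> (P *v (x - p)) \<le> 1}
                                    {e. e \<bullet> (matrix_inv Phat *v e) \<le> 1}) \<noteq> {}"
proof -
  have "x \<bullet> (Phat *v x) < x \<bullet> (matrix_inv P *v x)" if "x \<noteq> 0" for x
    using gap that unfolding pd_mat_def by (simp add: matrix_vector_mult_diff_rdistrib inner_diff_right)
  then obtain c where c: "0 < c" "c < 1"
    and le: "\<And>x. x \<bullet> (Phat *v x) \<le> c * (x \<bullet> (matrix_inv P *v x))"
    using quadratic_form_strict_le_scaled pd_mat_nonneg[OF pd_mat_matrix_inv_pd[OF P]] by blast
  have "e \<bullet> (P *v e) \<le> (sqrt c)\<^sup>2" if "e \<bullet> (matrix_inv Phat *v e) \<le> 1" for e
  proof -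
    have "e \<bullet> (P *v e) \<le> c * (e \<bullet> (matrix_inv Phat *v e))"
      by (rule loewner_le_matrix_inv[OF Phat P c(1) le])
    also have "\<dots> \<le> c" using that c(1) by (simp add: mult_left_le)
    finally show ?thesis using c(1) by simp
  qed
  then show ?thesis
    using c by (intro interior_pontryagin_diff_ellipsoid[OF P, of "sqrt c"]) auto
qed

lemma interior_pontryagin_diff_ellipsoid_image:
  fixes Q :: "real^'m^'m" and Phat :: "real^'n^'n" and Psi :: "real^'n^'m"
  assumes Q: "pd_mat Q" and Phat: "pd_mat Phat"
    and lmi: "pd_mat (block_mat Phat (transpose Psi ** msqrt Q) (msqrt Q ** Psi) (mat 1))"
  shows "interior (pontryagin_diff {u. u \<bullet> (Q *v u) \<le> 1}
            ((\<lambda>e. (Psi ** matrix_inv Phat) *v e) ` {e. e \<bullet> (matrix_inv Phat *v e) \<le> 1})) \<noteq> {}"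
proof -
  define S where "S = msqrt Q"
  define R where "R = transpose Psi ** Q ** Psi"
  have S: "transpose S = S" "S ** S = Q" using pd_mat_msqrt[OF Q] unfolding S_def pd_mat_def by auto
  have R: "a \<bullet> (R *v a) = (Psi *v a) \<bullet> (Q *v (Psi *v a))" for a
  proof -
    have "R *v a = transpose Psi *v (Q *v (Psi *v a))"
      by (simp only: R_def matrix_vector_mul_assoc matrix_mul_assoc)
    then show ?thesis using dot_lmul_matrix[of "Q *v (Psi *v a)" Psi a] by (simp add: inner_commute)
  qed
  have "a \<bullet> (R *v a) < a \<bullet> (Phat *v a)" if "a \<noteq> 0" for a
  proof -
    have "transpose (S ** Psi) = transpose Psi ** S" by (simp add: matrix_transpose_mul S(1))
    then have "pd_mat (block_mat Phat (transpose (S ** Psi)) (S ** Psi) (mat 1))"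
      using lmi by (simp add: S_def)
    then have "((S ** Psi) *v a) \<bullet> ((S ** Psi) *v a) < a \<bullet> (Phat *v a)"
      using that by (rule pd_block_identity_schur)
    moreover have "((S ** Psi) *v a) \<bullet> ((S ** Psi) *v a) = (S *v (Psi *v a)) \<bullet> (S *v (Psi *v a))"
      by (simp add: matrix_vector_mul_assoc)
    moreover have "\<dots> = (Psi *v a) \<bullet> (S *v (S *v (Psi *v a)))"
      by (rule inner_matrix_vector_symmetric[OF S(1), symmetric])
    moreover have "\<dots> = a \<bullet> (R *v a)" by (simp add: R matrix_vector_mul_assoc matrix_mul_assoc S(2))
    ultimately show ?thesis by simp
  qed
  then obtain c where c: "0 < c" "c < 1" and le: "\<And>a. a \<bullet> (R *v a) \<le> c * (a \<bullet> (Phat *v a))"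
    using quadratic_form_strict_le_scaled pd_mat_nonneg[OF Phat] by blast
  have "u \<bullet> (Q *v u) \<le> (sqrt c)\<^sup>2"
    if Eu: "u \<in> (\<lambda>e. (Psi ** matrix_inv Phat) *v e) ` {e. e \<bullet> (matrix_inv Phat *v e) \<le> 1}" for u
  proof -
    obtain e where e: "e \<bullet> (matrix_inv Phat *v e) \<le> 1" and u: "u = Psi *v (matrix_inv Phat *v e)"
      using Eu by (auto simp: matrix_vector_mul_assoc)
    define a where "a = matrix_inv Phat *v e"
    have "a \<bullet> (Phat *v a) = e \<bullet> (matrix_inv Phat *v e)"
      by (simp add: a_def pd_mat_matrix_inv_mult_vector(1)[OF Phat] inner_commute)
    then have "u \<bullet> (Q *v u) \<le> c * (e \<bullet> (matrix_inv Phat *v e))"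
      using le[of a] unfolding R u a_def by simp
    also have "\<dots> \<le> c" using e c(1) by (simp add: mult_left_le)
    finally show ?thesis using c(1) by simp
  qed
  then have "interior (pontryagin_diff {u. (u - 0) \<bullet> (Q *v (u - 0)) \<le> 1}
      ((\<lambda>e. (Psi ** matrix_inv Phat) *v e) ` {e. e \<bullet> (matrix_inv Phat *v e) \<le> 1})) \<noteq> {}"
    using c by (intro interior_pontryagin_diff_ellipsoid[OF Q, of "sqrt c"]) auto
  then show ?thesis by simp
qed

lemma err_traj_invariant:
  assumes step: "\<And>e v. e \<in> E \<Longrightarrow> v \<in> W \<Longrightarrow> F *v e + v \<in> E" and "0 \<in> E"
  shows "(\<And>s. s < t \<Longrightarrow> w s \<in> W) \<Longrightarrow> err_traj F w t \<in> E"
  by (induction t) (simp_all add: \<open>0 \<in> E\<close> step)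

lemma borel_measurable_err_traj:
  fixes w :: "nat \<Rightarrow> 'a \<Rightarrow> real^'n" and F :: "real^'n^'n"
  assumes "\<And>s. s < t \<Longrightarrow> w s \<in> borel_measurable M"
  shows "(\<lambda>\<omega>. err_traj F (\<lambda>s. w s \<omega>) t) \<in> borel_measurable M"
  using assms
proof (induction t)
  case (Suc t)
  then have "(\<lambda>\<omega>. err_traj F (\<lambda>s. w s \<omega>) t) \<in> borel_measurable M" by simp
  then have "(\<lambda>\<omega>. F *v err_traj F (\<lambda>s. w s \<omega>) t) \<in> borel_measurable M"
    by (rule measurable_compose[OF _ borel_measurable_continuous_onI[OF linear_continuous_on[OF
          matrix_vector_mul_bounded_linear]]])
  moreover have "w t \<in> borel_measurable M" using Suc.prems by simp
  ultimately show ?case by simp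
qed simp

lemma (in prob_space) measure_err_traj_invariant_ge:
  fixes w :: "nat \<Rightarrow> 'a \<Rightarrow> real^'n" and F :: "real^'n^'n"
  assumes w: "\<forall>t<N. w t \<in> borel_measurable M" and "closed E" "0 \<in> E"
    and step: "\<And>e v. e \<in> E \<Longrightarrow> v \<in> W \<Longrightarrow> F *v e + v \<in> E"
  shows "measure M {\<omega> \<in> space M. \<forall>t\<in>{0..<N}. w t \<omega> \<in> W}
           \<le> measure M {\<omega> \<in> space M. \<forall>t\<in>{1..N}. err_traj F (\<lambda>s. w s \<omega>) t \<in> E}"
proof (rule finite_measure_mono)
  show "{\<omega> \<in> space M. \<forall>t\<in>{0..<N}. w t \<omega> \<in> W}
          \<subseteq> {\<omega> \<in> space M. \<forall>t\<in>{1..N}. err_traj F (\<lambda>s. w s \<omega>) t \<in> E}"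
  proof clarify
    fix \<omega> t assume "\<forall>t\<in>{0..<N}. w t \<omega> \<in> W" "t \<in> {1..N}"
    then show "err_traj F (\<lambda>s. w s \<omega>) t \<in> E"
      by (intro err_traj_invariant[OF step \<open>0 \<in> E\<close>]) auto
  qed
  have "{\<omega> \<in> space M. err_traj F (\<lambda>s. w s \<omega>) t \<in> E} \<in> sets M" if "t \<in> {1..N}" for t
  proof -
    have "(\<lambda>\<omega>. err_traj F (\<lambda>s. w s \<omega>) t) \<in> borel_measurable M"
      using w that by (intro borel_measurable_err_traj) auto
    from measurable_sets[OF this borel_closed[OF \<open>closed E\<close>]]
    show ?thesis by (simp add: vimage_def Int_def conj_commute)
  qed
  then show "{\<omega> \<in> space M. \<forall>t\<in>{1..N}. err_traj F (\<lambda>s. w s \<omega>) t \<in> E} \<in> sets M"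
    using sets.sets_Collect_finite_All[where S="{1..N}" and P="\<lambda>t \<omega>. err_traj F (\<lambda>s. w s \<omega>) t \<in> E"]
    by simp
qed

theorem theorem2:
  fixes A :: "real^'n^'n" and B :: "real^'m^'n" and N :: nat and theta :: real
    and p :: "nat \<Rightarrow> real^'n" and P :: "nat \<Rightarrow> real^'n^'n" and Q :: "real^'m^'m"
    and Y :: "real^'n^'n"
    and M :: "'a measure" and w :: "nat \<Rightarrow> 'a \<Rightarrow> real^'n"
    and Phat :: "real^'n^'n" and Psi :: "real^'n^'m" and lam0 lam1 :: real
  assumes N: "N \<ge> 1"
    and theta_bd: "0 < theta" "theta < 1"
    and P_pd: "\<forall>t\<in>{1..N}. pd_mat (P t)"
    and Q_pd: "pd_mat Q"
    and Y_pd: "pd_mat Y"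
    and prob: "prob_space M"
    and w_meas: "\<forall>t<N. w t \<in> borel_measurable M"
    and w_bound: "measure M {\<omega> \<in> space M. \<forall>t\<in>{0..<N}. w t \<omega> \<in> {v. v \<bullet> (Y *v v) \<le> 1}}
                    \<ge> 1 - theta"
    and Phat_pd: "pd_mat Phat"
    and lam: "lam0 \<ge> 0" "lam1 > 0" "1 - lam0 - lam1 \<ge> 0"
    and lmi1: "psd_mat (block_mat (Phat - (1 / lam1) *\<^sub>R matrix_inv Y) (A ** Phat + B ** Psi)
                                  (transpose (A ** Phat + B ** Psi)) (lam0 *\<^sub>R Phat))"
    and lmi2: "pd_mat (block_mat Phat (transpose Psi ** msqrt Q) (msqrt Q ** Psi) (mat 1))"
    and lmi3: "\<forall>t\<in>{1..N}. pd_mat (matrix_inv (P t) - Phat)"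
  shows "let \<Phi> = matrix_inv Phat; K = Psi ** \<Phi>;
             E = {e. e \<bullet> (\<Phi> *v e) \<le> 1}; Eu = (\<lambda>e. K *v e) ` E;
             X = (\<lambda>t. {x. (x - p t) \<bullet> (P t *v (x - p t)) \<le> 1});
             U = {u. u \<bullet> (Q *v u) \<le> 1}
         in measure M {\<omega> \<in> space M. \<forall>t\<in>{1..N}. err_traj (A + B ** K) (\<lambda>s. w s \<omega>) t \<in> E}
              \<ge> 1 - theta
          \<and> (\<forall>t\<in>{1..N}. interior (pontryagin_diff (X t) E) \<noteq> {})
          \<and> interior (pontryagin_diff U Eu) \<noteq> {}"
proof -
  interpret prob_space M by (rule prob)
  define E where "E = {e. e \<bullet> (matrix_inv Phat *v e) \<le> 1}"
  define F where "F = A + B ** (Psi ** matrix_inv Phat)"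
  have "closed E" unfolding E_def
    by (intro closed_Collect_le continuous_on_quadratic_form continuous_on_const)
  moreover have "0 \<in> E" by (simp add: E_def)
  moreover have "F *v e + v \<in> E" if "e \<in> E" "v \<in> {v. v \<bullet> (Y *v v) \<le> 1}" for e v
    using lmi_ellipsoid_invariant[OF Phat_pd Y_pd lam lmi1] that unfolding E_def F_def by simp
  ultimately have "measure M {\<omega> \<in> space M. \<forall>t\<in>{0..<N}. w t \<omega> \<in> {v. v \<bullet> (Y *v v) \<le> 1}}
      \<le> measure M {\<omega> \<in> space M. \<forall>t\<in>{1..N}. err_traj F (\<lambda>s. w s \<omega>) t \<in> E}"
    by (rule measure_err_traj_invariant_ge[OF w_meas])
  with w_bound have
    "measure M {\<omega> \<in> space M. \<forall>t\<in>{1..N}. err_traj F (\<lambda>s. w s \<omega>) t \<in> E} \<ge> 1 - theta"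
    by linarith
  moreover have
    "\<forall>t\<in>{1..N}. interior (pontryagin_diff {x. (x - p t) \<bullet> (P t *v (x - p t)) \<le> 1} E) \<noteq> {}"
    using interior_pontryagin_diff_nested_ellipsoid P_pd Phat_pd lmi3 unfolding E_def by blast
  moreover have
    "interior (pontryagin_diff {u. u \<bullet> (Q *v u) \<le> 1} ((\<lambda>e. (Psi ** matrix_inv Phat) *v e) ` E))
      \<noteq> {}"
    using interior_pontryagin_diff_ellipsoid_image[OF Q_pd Phat_pd lmi2] unfolding E_def .
  ultimately show ?thesis unfolding Let_def E_def F_def by blast
qed

end
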